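(* Let $(X,*,0)$ be a solid weak BCC-algebra. Then for all $a\in I(X)$ and all $x\in B(a)$ we have $x*(x*a)=a$.
   Context: A weak BCC-algebra is a set $X$ with a binary operation $*$ and a constant $0$ satisfying, for all $x,y,z\in X$: (i) $((x*y)*(z*y))*(x*z)=0$; (ii) $x*x=0$; (iii) $x*0=x$; (iv) $x*y=y*x=0$ implies $x=y$. The relation $x\leqslant y$ iff $x*y=0$ is a partial order on $X$. Let $I(X)$ be the set of minimal elements of $X$ with respect to $\leqslant$. For $a\in I(X)$ the branch initiated by $a$ is $B(a)=\{x\in X: a\leqslant x\}$; "belonging to the same branch" means lying in a common $B(a)$. A weak BCC-algebra is called (left) solid if $(x*y)*z=(x*z)*y$ holds for all $x,y$ belonging to the same branch and all $z\in X$. *)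

theory Defs
  imports Main
begin

definition weak_BCC :: "('a \<Rightarrow> 'a \<Rightarrow> 'a) \<Rightarrow> 'a \<Rightarrow> bool" where
  "weak_BCC m z \<longleftrightarrow>
     (\<forall>x y w. m (m (m x y) (m w y)) (m x w) = z) \<and>
     (\<forall>x. m x x = z) \<and>
     (\<forall>x. m x z = x) \<and>
     (\<forall>x y. m x y = z \<and> m y x = z \<longrightarrow> x = y)"

definition bcc_le :: "('a \<Rightarrow> 'a \<Rightarrow> 'a) \<Rightarrow> 'a \<Rightarrow> 'a \<Rightarrow> 'a \<Rightarrow> bool" where
  "bcc_le m z x y \<longleftrightarrow> m x y = z"

definition minimal_elems :: "('a \<Rightarrow> 'a \<Rightarrow> 'a) \<Rightarrow> 'a \<Rightarrow> 'a set" where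
  "minimal_elems m z = {a. \<forall>x. bcc_le m z x a \<longrightarrow> x = a}"

definition branch :: "('a \<Rightarrow> 'a \<Rightarrow> 'a) \<Rightarrow> 'a \<Rightarrow> 'a \<Rightarrow> 'a set" where
  "branch m z a = {x. bcc_le m z a x}"

definition same_branch :: "('a \<Rightarrow> 'a \<Rightarrow> 'a) \<Rightarrow> 'a \<Rightarrow> 'a \<Rightarrow> 'a \<Rightarrow> bool" where
  "same_branch m z x y \<longleftrightarrow> (\<exists>a \<in> minimal_elems m z. x \<in> branch m z a \<and> y \<in> branch m z a)"

definition solid :: "('a \<Rightarrow> 'a \<Rightarrow> 'a) \<Rightarrow> 'a \<Rightarrow> bool" where
  "solid m z \<longleftrightarrow> (\<forall>x y w. same_branch m z x y \<longrightarrow> m (m x y) w = m (m x w) y)"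

end

theory Submission
  imports Defs
begin

text \<open>Since \<open>x\<close> and \<open>a\<close> both lie in \<open>B(a)\<close>, solidity swaps the two right factors in
  \<open>(x * (x * a)) * a\<close>, turning it into \<open>(x * a) * (x * a) = 0\<close>; so \<open>x * (x * a) \<le> a\<close>, and
  minimality of \<open>a\<close> forces equality.\<close>

lemma weak_BCC_self [simp]: "weak_BCC m z \<Longrightarrow> m x x = z"
  unfolding weak_BCC_def by blast

lemma branch_refl:
  assumes "weak_BCC m z"
  shows "a \<in> branch m z a"
  using assms unfolding branch_def bcc_le_def by simp

lemma minimal_elemsD:
  assumes "a \<in> minimal_elems m z" and "bcc_le m z x a"
  shows "x = a"
  using assms unfolding minimal_elems_def by blast

lemma same_branch_with_root:
  assumes "weak_BCC m z" and "a \<in> minimal_elems m z" and "x \<in> branch m z a"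
  shows "same_branch m z x a"
  using assms branch_refl[OF assms(1)] unfolding same_branch_def by blast

lemma solidD:
  assumes "solid m z" and "same_branch m z x y"
  shows "m (m x y) w = m (m x w) y"
  using assms unfolding solid_def by blast

theorem corollary3p4:
  fixes m :: "'a \<Rightarrow> 'a \<Rightarrow> 'a" and z :: 'a
  assumes "weak_BCC m z" and "solid m z"
    and "a \<in> minimal_elems m z" and "x \<in> branch m z a"
  shows "m x (m x a) = a"
proof -
  have "same_branch m z x a"
    using assms(1,3,4) by (rule same_branch_with_root)
  then have "m (m x (m x a)) a = m (m x a) (m x a)"
    by (rule solidD[OF assms(2), symmetric])
  also have "\<dots> = z"
    using assms(1) by simp
  finally have "bcc_le m z (m x (m x a)) a"
    unfolding bcc_le_def .
  then show ?thesis
    by (rule minimal_elemsD[OF assms(3)])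
qed

end
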